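(* Assume the standing hypotheses (H). Then for every part $A$ of $G$ and every color $c$, at most two vertices $v\in A$ satisfy $c\in L(v)$.
   Context: A list assignment $L$ assigns to each vertex $v$ a set $L(v)$ of colors; an $L$-coloring is a proper coloring $f$ with $f(v)\in L(v)$ for all $v$; $\mathrm{ch}$ denotes choice number and $\chi$ chromatic number. A part of a complete multipartite graph is one of its maximal stable sets. Standing hypotheses (H): $k\ge1$ and $n\ge 2k+2$ are integers; $G$ is a complete $k$-partite graph (exactly $k$ nonempty parts) on $n$ vertices; $L$ is a list assignment for $G$ with $|L(v)|\ge\lceil (n+k-1)/3\rceil$ for every vertex $v$; $G$ has no $L$-coloring; $\left|\bigcup_{v\in V(G)}L(v)\right|\le n-1$; and every graph $H$ with fewer than $n$ vertices satisfies $\mathrm{ch}(H)\le\max\{\chi(H),\lceil(|V(H)|+\chi(H)-1)/3\rceil\}$. *)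

theory Defs
  imports Complex_Main "HOL-Library.Disjoint_Sets"
begin

definition simple_graph :: "'a set \<Rightarrow> ('a \<Rightarrow> 'a \<Rightarrow> bool) \<Rightarrow> bool" where
  "simple_graph V E \<longleftrightarrow> finite V \<and> (\<forall>u v. E u v \<longrightarrow> u \<in> V \<and> v \<in> V)
     \<and> (\<forall>u v. E u v \<longrightarrow> E v u) \<and> (\<forall>v. \<not> E v v)"

definition proper_coloring :: "'a set \<Rightarrow> ('a \<Rightarrow> 'a \<Rightarrow> bool) \<Rightarrow> ('a \<Rightarrow> 'c) \<Rightarrow> bool" where
  "proper_coloring V E f \<longleftrightarrow> (\<forall>u\<in>V. \<forall>v\<in>V. E u v \<longrightarrow> f u \<noteq> f v)"

definition L_coloring :: "'a set \<Rightarrow> ('a \<Rightarrow> 'a \<Rightarrow> bool) \<Rightarrow> ('a \<Rightarrow> 'c set) \<Rightarrow> ('a \<Rightarrow> 'c) \<Rightarrow> bool" where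
  "L_coloring V E L f \<longleftrightarrow> proper_coloring V E f \<and> (\<forall>v\<in>V. f v \<in> L v)"

definition colorable :: "'a set \<Rightarrow> ('a \<Rightarrow> 'a \<Rightarrow> bool) \<Rightarrow> nat \<Rightarrow> bool" where
  "colorable V E k \<longleftrightarrow> (\<exists>f :: 'a \<Rightarrow> nat. proper_coloring V E f \<and> f ` V \<subseteq> {..<k})"

definition chromatic_number :: "'a set \<Rightarrow> ('a \<Rightarrow> 'a \<Rightarrow> bool) \<Rightarrow> nat" where
  "chromatic_number V E = (LEAST k. colorable V E k)"

definition choosable :: "'a set \<Rightarrow> ('a \<Rightarrow> 'a \<Rightarrow> bool) \<Rightarrow> nat \<Rightarrow> bool" where
  "choosable V E k \<longleftrightarrow> (\<forall>L :: 'a \<Rightarrow> nat set.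
      (\<forall>v\<in>V. finite (L v) \<and> card (L v) \<ge> k) \<longrightarrow> (\<exists>f. L_coloring V E L f))"

definition choice_number :: "'a set \<Rightarrow> ('a \<Rightarrow> 'a \<Rightarrow> bool) \<Rightarrow> nat" where
  "choice_number V E = (LEAST k. choosable V E k)"

definition stable_set :: "'a set \<Rightarrow> ('a \<Rightarrow> 'a \<Rightarrow> bool) \<Rightarrow> 'a set \<Rightarrow> bool" where
  "stable_set V E A \<longleftrightarrow> A \<subseteq> V \<and> (\<forall>u\<in>A. \<forall>v\<in>A. \<not> E u v)"

text \<open>A part of a complete multipartite graph: a maximal stable set.\<close>
definition part :: "'a set \<Rightarrow> ('a \<Rightarrow> 'a \<Rightarrow> bool) \<Rightarrow> 'a set \<Rightarrow> bool" where
  "part V E A \<longleftrightarrow> stable_set V E A \<and> (\<forall>B. stable_set V E B \<and> A \<subseteq> B \<longrightarrow> B = A)"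

definition complete_multipartite :: "'a set \<Rightarrow> ('a \<Rightarrow> 'a \<Rightarrow> bool) \<Rightarrow> nat \<Rightarrow> bool" where
  "complete_multipartite V E k \<longleftrightarrow> finite V \<and> (\<exists>P. partition_on V P \<and> card P = k \<and>
     (\<forall>u v. E u v \<longleftrightarrow> u \<in> V \<and> v \<in> V \<and> \<not> (\<exists>X\<in>P. u \<in> X \<and> v \<in> X)))"

end

theory Submission
  imports Defs
begin

text \<open>Suppose three vertices of a part A have a common colour c. Deleting them leaves a graph
  on n - 3 vertices with chromatic number at most k, so by the minimality hypothesis it is
  (s - 1)-choosable, where s = \<lceil>(n + k - 1) / 3\<rceil> and n \<ge> 2k + 2 makes k < s. The lists
  L v - {c} have at least s - 1 colours, hence colour the remaining graph; the three deleted
  vertices form a stable set and all receive c, giving an L-colouring of G.\<close>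

lemma inj_on_choice_from_large_lists:
  assumes "finite V" and "\<forall>v\<in>V. finite (L v) \<and> card V \<le> card (L v)"
  shows "\<exists>f. inj_on f V \<and> (\<forall>v\<in>V. f v \<in> L v)"
  using assms
proof (induction V rule: finite_induct)
  case empty
  then show ?case by auto
next
  case (insert x F)
  then obtain f where f: "inj_on f F" "\<forall>v\<in>F. f v \<in> L v" by fastforce
  have "card (f ` F) < card (L x)"
    using insert card_image_le[of F f] by auto
  then have "\<not> L x \<subseteq> f ` F"
    using insert.hyps(1) by (meson card_mono finite_imageI not_le)
  then obtain a where "a \<in> L x" "a \<notin> f ` F" by blast
  with f insert.hyps show ?case
    by (intro exI[of _ "f(x := a)"]) (auto simp: inj_on_def)
qed

lemma choosable_card: "simple_graph V E \<Longrightarrow> choosable V E (card V)"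
  unfolding choosable_def
proof (intro allI impI)
  fix L :: "'a \<Rightarrow> nat set"
  assume sg: "simple_graph V E" and L: "\<forall>v\<in>V. finite (L v) \<and> card V \<le> card (L v)"
  obtain f where f: "inj_on f V" "\<forall>v\<in>V. f v \<in> L v"
    using inj_on_choice_from_large_lists[OF _ L] sg by (auto simp: simple_graph_def)
  have "proper_coloring V E f"
    using f(1) sg unfolding proper_coloring_def simple_graph_def by (metis inj_on_def)
  with f(2) show "\<exists>f. L_coloring V E L f" unfolding L_coloring_def by blast
qed

lemma choosable_mono: "choosable V E k \<Longrightarrow> k \<le> m \<Longrightarrow> choosable V E m"
  unfolding choosable_def by (meson le_trans)

lemma choosable_if_choice_number_le:
  "simple_graph V E \<Longrightarrow> choice_number V E \<le> m \<Longrightarrow> choosable V E m"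
  unfolding choice_number_def by (meson LeastI choosable_card choosable_mono)

lemma chromatic_number_le: "colorable V E k \<Longrightarrow> chromatic_number V E \<le> k"
  unfolding chromatic_number_def by (rule Least_le)

text \<open>Transporting (W, E) along an injection into nat makes the minimality hypothesis,
  which only speaks about graphs on nat, applicable.\<close>
definition map_graph :: "('a \<Rightarrow> 'b) \<Rightarrow> 'a set \<Rightarrow> ('a \<Rightarrow> 'a \<Rightarrow> bool) \<Rightarrow> 'b \<Rightarrow> 'b \<Rightarrow> bool" where
  "map_graph h W E x y \<longleftrightarrow> (\<exists>u\<in>W. \<exists>v\<in>W. x = h u \<and> y = h v \<and> E u v)"

lemma simple_graph_map_graph:
  assumes "finite W" "inj_on h W" "\<And>u v. E u v \<Longrightarrow> E v u" "\<And>v. \<not> E v v"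
  shows "simple_graph (h ` W) (map_graph h W E)"
  using assms unfolding simple_graph_def map_graph_def inj_on_def by blast

lemma colorable_map_graph:
  assumes "colorable W E k" "inj_on h W"
  shows "colorable (h ` W) (map_graph h W E) k"
proof -
  obtain f :: "'a \<Rightarrow> nat" where f: "proper_coloring W E f" "f ` W \<subseteq> {..<k}"
    using assms(1) unfolding colorable_def by blast
  have "proper_coloring (h ` W) (map_graph h W E) (f \<circ> inv_into W h)"
    unfolding proper_coloring_def
  proof (intro ballI impI)
    fix x y assume "map_graph h W E x y"
    then obtain u v where "u \<in> W" "v \<in> W" "x = h u" "y = h v" "E u v"
      unfolding map_graph_def by blast
    with f(1) assms(2) show "(f \<circ> inv_into W h) x \<noteq> (f \<circ> inv_into W h) y"
      unfolding proper_coloring_def by simp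
  qed
  moreover have "(f \<circ> inv_into W h) ` h ` W \<subseteq> {..<k}"
    using f(2) assms(2) by auto
  ultimately show ?thesis unfolding colorable_def by blast
qed

lemma L_coloring_if_map_graph_choosable:
  assumes inj: "inj_on h W" and ch: "choosable (h ` W) (map_graph h W E) m"
    and fin: "finite (\<Union>v\<in>W. L v)" and L: "\<forall>v\<in>W. m \<le> card (L v)"
  shows "\<exists>f. L_coloring W E L f"
proof -
  define U where "U = (\<Union>v\<in>W. L v)"
  \<comment> \<open>choosability only speaks about lists of naturals, so the colours are renamed into nat\<close>
  obtain cm :: "'c \<Rightarrow> nat" where cm: "inj_on cm U"
    using finite_imp_inj_to_nat_seg fin unfolding U_def by blast
  define LH where "LH x = cm ` L (inv_into W h x)" for x
  have LU: "L v \<subseteq> U" if "v \<in> W" for v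
    using that unfolding U_def by blast
  have "\<forall>x\<in>h ` W. finite (LH x) \<and> m \<le> card (LH x)"
  proof
    fix x assume "x \<in> h ` W"
    then obtain v where v: "v \<in> W" "x = h v" by blast
    then have LH_x: "LH x = cm ` L v"
      using inj by (simp add: LH_def)
    have "finite (L v)"
      using v(1) fin unfolding U_def[symmetric] by (meson LU finite_subset)
    moreover have "card (LH x) = card (L v)"
      unfolding LH_x using inj_on_subset[OF cm LU[OF v(1)]] by (rule card_image)
    ultimately show "finite (LH x) \<and> m \<le> card (LH x)"
      using L v(1) LH_x by simp
  qed
  then obtain f where f: "L_coloring (h ` W) (map_graph h W E) LH f"
    using ch unfolding choosable_def by blast
  have f_in: "f (h v) \<in> cm ` L v" if "v \<in> W" for v
    using f that inj unfolding L_coloring_def LH_def by auto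
  have "L_coloring W E L (inv_into U cm \<circ> f \<circ> h)"
    unfolding L_coloring_def proper_coloring_def
  proof (intro conjI ballI impI)
    fix v assume "v \<in> W"
    then obtain a where "a \<in> L v" "f (h v) = cm a"
      using f_in by blast
    with cm LU[OF \<open>v \<in> W\<close>] show "(inv_into U cm \<circ> f \<circ> h) v \<in> L v"
      by auto
  next
    fix u v assume uv: "u \<in> W" "v \<in> W" "E u v"
    then have "f (h u) \<noteq> f (h v)"
      using f unfolding L_coloring_def proper_coloring_def map_graph_def by blast
    moreover have "f (h u) \<in> cm ` U" "f (h v) \<in> cm ` U"
      using f_in uv LU by blast+
    ultimately show "(inv_into U cm \<circ> f \<circ> h) u \<noteq> (inv_into U cm \<circ> f \<circ> h) v"
      by (auto dest: inv_into_injective)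
  qed
  then show ?thesis by blast
qed

lemma L_coloring_extend_stable:
  assumes f: "L_coloring (V - T) E (\<lambda>v. L v - {c}) f"
    and c: "\<forall>v\<in>T. c \<in> L v" and stable: "\<forall>u\<in>T. \<forall>v\<in>T. \<not> E u v"
  shows "L_coloring V E L (\<lambda>v. if v \<in> T then c else f v)"
proof -
  have f_in: "f v \<in> L v \<and> f v \<noteq> c" if "v \<in> V - T" for v
    using f that unfolding L_coloring_def by blast
  have f_proper: "f u \<noteq> f v" if "u \<in> V - T" "v \<in> V - T" "E u v" for u v
    using f that unfolding L_coloring_def proper_coloring_def by blast
  show ?thesis
    unfolding L_coloring_def proper_coloring_def
  proof (intro conjI ballI impI)
    fix v assume "v \<in> V"
    then show "(if v \<in> T then c else f v) \<in> L v"
      using c f_in by simp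
  next
    fix u v assume "u \<in> V" "v \<in> V" "E u v"
    then show "(if u \<in> T then c else f u) \<noteq> (if v \<in> T then c else f v)"
      using stable f_in f_proper by (cases "u \<in> T"; cases "v \<in> T") auto
  qed
qed

lemma complete_multipartite_sym_irrefl:
  assumes "complete_multipartite V E k"
  shows "E u v \<Longrightarrow> E v u" and "\<not> E v v"
proof -
  obtain P where P: "partition_on V P"
    and E: "\<forall>u v. E u v \<longleftrightarrow> u \<in> V \<and> v \<in> V \<and> \<not> (\<exists>X\<in>P. u \<in> X \<and> v \<in> X)"
    using assms unfolding complete_multipartite_def by blast
  show "E u v \<Longrightarrow> E v u"
    using E by blast
  have "\<Union>P = V"
    using P by (simp add: partition_on_def)
  then show "\<not> E v v"
    using E by blast
qed

lemma complete_multipartite_colorable: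
  assumes "complete_multipartite V E k" "W \<subseteq> V"
  shows "colorable W E k"
proof -
  obtain P where P: "partition_on V P" "card P = k"
    and E: "\<forall>u v. E u v \<longleftrightarrow> u \<in> V \<and> v \<in> V \<and> \<not> (\<exists>X\<in>P. u \<in> X \<and> v \<in> X)"
    using assms(1) unfolding complete_multipartite_def by blast
  have "finite (\<Union>P)"
    using P(1) assms(1) unfolding partition_on_def complete_multipartite_def by simp
  then obtain g :: "'a set \<Rightarrow> nat" where g: "bij_betw g P {..<k}"
    using ex_bij_betw_finite_nat[OF finite_UnionD] P(2) by (auto simp: atLeast0LessThan)
  define part_of where "part_of v = (SOME X. X \<in> P \<and> v \<in> X)" for v
  have part_of: "part_of v \<in> P \<and> v \<in> part_of v" if "v \<in> V" for v
    unfolding part_of_def by (rule someI_ex) (use that P(1) in \<open>auto simp: partition_on_def\<close>)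
  have "proper_coloring W E (g \<circ> part_of)"
    unfolding proper_coloring_def
  proof (intro ballI impI notI)
    fix u v assume "u \<in> W" "v \<in> W" "E u v" "(g \<circ> part_of) u = (g \<circ> part_of) v"
    moreover have "part_of u \<in> P" "part_of v \<in> P"
      using part_of assms(2) \<open>u \<in> W\<close> \<open>v \<in> W\<close> by blast+
    ultimately have "part_of u = part_of v"
      using inj_onD[OF bij_betw_imp_inj_on[OF g]] by simp
    with \<open>u \<in> W\<close> \<open>v \<in> W\<close> \<open>E u v\<close> show False
      using part_of assms(2) E by blast
  qed
  moreover have "(g \<circ> part_of) ` W \<subseteq> {..<k}"
    using part_of g assms(2) by (auto simp: bij_betw_def)
  ultimately show ?thesis unfolding colorable_def by blast
qed

lemma part_stable: "part V E A \<Longrightarrow> A \<subseteq> V \<and> (\<forall>u\<in>A. \<forall>v\<in>A. \<not> E u v)"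
  by (simp add: part_def stable_set_def)

lemma ceiling_bound_after_deleting_three:
  fixes n k \<chi> :: nat
  assumes "1 \<le> k" "2 * k + 2 \<le> n" "\<chi> \<le> k"
  shows "max \<chi> (nat \<lceil>(real (n - 3) + real \<chi> - 1) / 3\<rceil>) \<le> nat \<lceil>(real n + real k - 1) / 3\<rceil> - 1"
proof -
  have "real (2 * k + 2) \<le> real n"
    using assms(2) by (simp only: of_nat_le_iff)
  then have "real k < (real n + real k - 1) / 3"
    by simp
  then have \<chi>_less: "\<chi> < nat \<lceil>(real n + real k - 1) / 3\<rceil>"
    using assms(3) by linarith
  have "real (n - 3) = real n - 3"
    using assms(1,2) by (subst of_nat_diff) auto
  then have "real (n - 3) + real \<chi> - 1 \<le> real n + real k - 1 - 3"
    using of_nat_mono[OF assms(3), where 'a=real] by linarith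
  then have "(real (n - 3) + real \<chi> - 1) / 3 \<le> (real n + real k - 1 - 3) / 3"
    by (rule divide_right_mono) simp
  also have "\<dots> = (real n + real k - 1) / 3 - 1"
    by (simp add: diff_divide_distrib)
  finally have "(real (n - 3) + real \<chi> - 1) / 3 \<le> (real n + real k - 1) / 3 - 1" .
  then have "\<lceil>(real (n - 3) + real \<chi> - 1) / 3\<rceil> \<le> \<lceil>(real n + real k - 1) / 3\<rceil> - 1"
    by (metis ceiling_diff_one ceiling_mono)
  with \<chi>_less show ?thesis by linarith
qed

theorem corollary12:
  fixes V :: "'a set" and E :: "'a \<Rightarrow> 'a \<Rightarrow> bool" and L :: "'a \<Rightarrow> 'c set"
    and k n :: nat
  assumes "k \<ge> 1" and "n \<ge> 2 * k + 2"
    and "complete_multipartite V E k" and "card V = n"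
    and "\<forall>v\<in>V. card (L v) \<ge> nat \<lceil>(real n + real k - 1) / 3\<rceil>"
    and "\<not> (\<exists>f. L_coloring V E L f)"
    and "finite (\<Union>v\<in>V. L v)" and "card (\<Union>v\<in>V. L v) \<le> n - 1"
    and "\<forall>(VH :: nat set) EH. simple_graph VH EH \<and> card VH < n \<longrightarrow>
           choice_number VH EH \<le> max (chromatic_number VH EH)
             (nat \<lceil>(real (card VH) + real (chromatic_number VH EH) - 1) / 3\<rceil>)"
  shows "\<forall>A c. part V E A \<longrightarrow> card {v \<in> A. c \<in> L v} \<le> 2"
proof (intro allI impI)
  fix A c assume part: "part V E A"
  have finV: "finite V"
    using assms(3) unfolding complete_multipartite_def by blast
  show "card {v \<in> A. c \<in> L v} \<le> 2"
  proof (rule ccontr)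
    assume "\<not> ?thesis"
    then have "3 \<le> card {v \<in> A. c \<in> L v}" by simp
    then obtain T where T: "T \<subseteq> {v \<in> A. c \<in> L v}" "card T = 3"
      by (rule obtain_subset_with_card_n)
    have "T \<subseteq> V"
      using T(1) part_stable[OF part] by blast
    define W where "W = V - T"
    have finW: "finite W"
      unfolding W_def using finV by (rule finite_Diff)
    then obtain h :: "'a \<Rightarrow> nat" where h: "inj_on h W"
      using finite_imp_inj_to_nat_seg by blast
    let ?G = "map_graph h W E" and ?s = "nat \<lceil>(real n + real k - 1) / 3\<rceil>"
    define \<chi> where "\<chi> = chromatic_number (h ` W) ?G"
    have cardW: "card (h ` W) = n - 3"
      using card_image[OF h] card_Diff_subset[OF finite_subset[OF \<open>T \<subseteq> V\<close> finV] \<open>T \<subseteq> V\<close>]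
        T(2) assms(4)
      by (simp add: W_def)
    have sg: "simple_graph (h ` W) ?G"
      using finW h complete_multipartite_sym_irrefl[OF assms(3)] by (rule simple_graph_map_graph)
    have "\<chi> \<le> k"
      unfolding \<chi>_def
      by (intro chromatic_number_le colorable_map_graph[OF _ h]
          complete_multipartite_colorable[OF assms(3)]) (simp add: W_def)
    have "card (h ` W) < n"
      using cardW assms(1,2) by simp
    then have "choice_number (h ` W) ?G
        \<le> max \<chi> (nat \<lceil>(real (card (h ` W)) + real \<chi> - 1) / 3\<rceil>)"
      unfolding \<chi>_def by (rule assms(9)[rule_format, OF conjI[OF sg]])
    also have "\<dots> \<le> ?s - 1"
      unfolding cardW by (rule ceiling_bound_after_deleting_three[OF assms(1,2) \<open>\<chi> \<le> k\<close>])
    finally have "choosable (h ` W) ?G (?s - 1)"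
      by (rule choosable_if_choice_number_le[OF sg])
    moreover have "finite (\<Union>v\<in>W. L v - {c})"
      using assms(7) by (rule finite_subset[rotated]) (auto simp: W_def)
    moreover have "\<forall>v\<in>W. ?s - 1 \<le> card (L v - {c})"
    proof
      fix v assume "v \<in> W"
      then have "?s \<le> card (L v)"
        using assms(5) unfolding W_def by blast
      then have "?s - 1 \<le> card (L v) - 1"
        by (rule diff_le_mono)
      also have "\<dots> \<le> card (L v - {c})"
        using diff_card_le_card_Diff[of "{c}" "L v"] by simp
      finally show "?s - 1 \<le> card (L v - {c})" .
    qed
    ultimately obtain f where f: "L_coloring W E (\<lambda>v. L v - {c}) f"
      using L_coloring_if_map_graph_choosable[OF h] by blast
    have "\<forall>v\<in>T. c \<in> L v" "\<forall>u\<in>T. \<forall>v\<in>T. \<not> E u v"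
      using T(1) part_stable[OF part] by blast+
    then have "L_coloring V E L (\<lambda>v. if v \<in> T then c else f v)"
      by (rule L_coloring_extend_stable[OF f[unfolded W_def]])
    with assms(6) show False by blast
  qed
qed

end
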